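(* Let $G$ be a group with finite generating set $S$, Cayley graph $\mathcal G$ with word metric $d$, and $0<\lambda<1$. Let $\xi\in\partial_\lambda G$, let $\gamma$ be a geodesic from $1$ to $\xi$, let $v$ be a vertex on $\gamma$, and set $r=\lambda^{d(1,v)}$. Then: (1) for every $R>0$ there is $C_1=C_1(R,\lambda)>0$ with $\Pi_1(v,R)\subset B_{\rho_\lambda}(\xi,C_1r)$; (2) for every $\kappa>0$ there are $R=R(\kappa)>0$ and $C_2=C_2(\kappa)>0$ such that if $\rho^v_\lambda(1,\xi)\ge\kappa$ then $B_{\rho_\lambda}(\xi,C_2r)\subset\Pi_1(v,R)$.
   Context: Floyd metric: for a basepoint $o\in G$, an edge $e$ of $\mathcal G$ has length $\lambda^{d(o,e)}$ and $\rho^o_\lambda$ is the induced length metric; $\rho_\lambda=\rho^1_\lambda$. $\partial_\lambda G=\overline G_\lambda\setminus G$, where $\overline G_\lambda$ is the Cauchy completion of $(G,\rho_\lambda)$; any two points of $G\cup\partial_\lambda G$ are joined by a (finite, semi-infinite or bi-infinite) geodesic of $\mathcal G$. Shadow: $\Pi_x(y,R)=\{\eta\in\partial_\lambda G:\text{ some geodesic }[x,\eta]\text{ meets }B(y,R)\}$. $B_{\rho_\lambda}(\xi,t)$ is the $\rho_\lambda$-ball in $\partial_\lambda G$. *)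

theory Defs
  imports "HOL-Algebra.Generated_Groups" Complex_Main
begin

definition cay_adj :: "('a, 'b) monoid_scheme \<Rightarrow> 'a set \<Rightarrow> 'a \<Rightarrow> 'a \<Rightarrow> bool" where
  "cay_adj G S x y \<longleftrightarrow> x \<in> carrier G \<and> y \<in> carrier G \<and>
     (\<exists>s\<in>S. y = x \<otimes>\<^bsub>G\<^esub> s \<or> x = y \<otimes>\<^bsub>G\<^esub> s)"

definition cay_walk :: "('a, 'b) monoid_scheme \<Rightarrow> 'a set \<Rightarrow> 'a list \<Rightarrow> bool" where
  "cay_walk G S p \<longleftrightarrow> p \<noteq> [] \<and> set p \<subseteq> carrier G \<and>
     (\<forall>i. Suc i < length p \<longrightarrow> cay_adj G S (p ! i) (p ! Suc i))"

definition word_dist :: "('a, 'b) monoid_scheme \<Rightarrow> 'a set \<Rightarrow> 'a \<Rightarrow> 'a \<Rightarrow> nat" where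
  "word_dist G S x y = (LEAST n. \<exists>p. cay_walk G S p \<and> hd p = x \<and> last p = y \<and> length p = Suc n)"

definition floyd_len :: "('a, 'b) monoid_scheme \<Rightarrow> 'a set \<Rightarrow> real \<Rightarrow> 'a \<Rightarrow> 'a list \<Rightarrow> real" where
  "floyd_len G S lam b p =
     (\<Sum>i < length p - 1. lam ^ min (word_dist G S b (p ! i)) (word_dist G S b (p ! Suc i)))"

definition floyd_dist :: "('a, 'b) monoid_scheme \<Rightarrow> 'a set \<Rightarrow> real \<Rightarrow> 'a \<Rightarrow> 'a \<Rightarrow> 'a \<Rightarrow> real" where
  "floyd_dist G S lam b x y =
     Inf {floyd_len G S lam b p | p. cay_walk G S p \<and> hd p = x \<and> last p = y}"

text \<open>Points of the Cauchy
  completion are represented by Cauchy sequences (modulo the usual equivalence;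
  all notions below are invariant under it).\<close>
definition floyd_cauchy :: "('a, 'b) monoid_scheme \<Rightarrow> 'a set \<Rightarrow> real \<Rightarrow> (nat \<Rightarrow> 'a) \<Rightarrow> bool" where
  "floyd_cauchy G S lam x \<longleftrightarrow> (\<forall>n. x n \<in> carrier G) \<and>
     (\<forall>e>0. \<exists>N. \<forall>m\<ge>N. \<forall>n\<ge>N. floyd_dist G S lam \<one>\<^bsub>G\<^esub> (x m) (x n) < e)"

definition floyd_boundary :: "('a, 'b) monoid_scheme \<Rightarrow> 'a set \<Rightarrow> real \<Rightarrow> (nat \<Rightarrow> 'a) set" where
  "floyd_boundary G S lam = {x. floyd_cauchy G S lam x \<and>
     \<not> (\<exists>g\<in>carrier G. (\<lambda>n. floyd_dist G S lam \<one>\<^bsub>G\<^esub> (x n) g) \<longlonglongrightarrow> 0)}"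

text \<open>Extension of rho^o_lam to the completion (points of G are constant sequences).\<close>
definition floyd_dist_ext :: "('a, 'b) monoid_scheme \<Rightarrow> 'a set \<Rightarrow> real \<Rightarrow> 'a \<Rightarrow> (nat \<Rightarrow> 'a) \<Rightarrow> (nat \<Rightarrow> 'a) \<Rightarrow> real" where
  "floyd_dist_ext G S lam b x y = lim (\<lambda>n. floyd_dist G S lam b (x n) (y n))"

definition geod_ray :: "('a, 'b) monoid_scheme \<Rightarrow> 'a set \<Rightarrow> 'a \<Rightarrow> (nat \<Rightarrow> 'a) \<Rightarrow> bool" where
  "geod_ray G S x \<gamma> \<longleftrightarrow> \<gamma> 0 = x \<and> (\<forall>i. \<gamma> i \<in> carrier G) \<and>
     (\<forall>i j. real (word_dist G S (\<gamma> i) (\<gamma> j)) = \<bar>real i - real j\<bar>)"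

definition geod_to :: "('a, 'b) monoid_scheme \<Rightarrow> 'a set \<Rightarrow> real \<Rightarrow> 'a \<Rightarrow> (nat \<Rightarrow> 'a) \<Rightarrow> (nat \<Rightarrow> 'a) \<Rightarrow> bool" where
  "geod_to G S lam x \<eta> \<gamma> \<longleftrightarrow> geod_ray G S x \<gamma> \<and>
     (\<lambda>n. floyd_dist G S lam \<one>\<^bsub>G\<^esub> (\<gamma> n) (\<eta> n)) \<longlonglongrightarrow> 0"

definition shadow :: "('a, 'b) monoid_scheme \<Rightarrow> 'a set \<Rightarrow> real \<Rightarrow> 'a \<Rightarrow> 'a \<Rightarrow> real \<Rightarrow> (nat \<Rightarrow> 'a) set" where
  "shadow G S lam x y R = {\<eta> \<in> floyd_boundary G S lam.
     \<exists>\<gamma>. geod_to G S lam x \<eta> \<gamma> \<and> (\<exists>i. real (word_dist G S (\<gamma> i) y) \<le> R)}"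

definition floyd_ball :: "('a, 'b) monoid_scheme \<Rightarrow> 'a set \<Rightarrow> real \<Rightarrow> (nat \<Rightarrow> 'a) \<Rightarrow> real \<Rightarrow> (nat \<Rightarrow> 'a) set" where
  "floyd_ball G S lam \<xi> t = {\<eta> \<in> floyd_boundary G S lam.
     floyd_dist_ext G S lam \<one>\<^bsub>G\<^esub> \<xi> \<eta> < t}"

end

theory Submission
  imports Defs "HOL-Library.Infinite_Set"
begin

(* Write |v| = d 1 v = j for the point v = gamma j.

   Shadow inside ball: if a geodesic beta towards eta passes within R of v, then xi and eta are
   joined by the tail of gamma after v, a word geodesic of length at most R from v to beta, and
   the tail of beta. Every edge of these pieces lies at distance at least about |v| - R from 1,
   and the tails of geodesic rays have geometrically decaying Floyd length, so
   rho(xi, eta) <= C lam ^ |v|.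

   Ball inside shadow: geodesics from 1 to any boundary point exist by Koenig's lemma, the Cayley
   graph being locally finite. If such a geodesic alpha towards eta stayed outside B(v, R), the
   edge of alpha at position t would lie at distance at least max(R, |t - |v|| - 1) from v, so
   rho^v(1, eta) would be of order sqrt lam ^ R. Since rho^v <= lam ^ -|v| rho, a point eta with
   rho(xi, eta) < kappa/2 lam ^ |v| would force rho^v(1, xi) < kappa for R large. *)

fun sum_consec :: "('a \<Rightarrow> 'a \<Rightarrow> 'b::comm_monoid_add) \<Rightarrow> 'a list \<Rightarrow> 'b" where
  "sum_consec g [] = 0"
| "sum_consec g [x] = 0"
| "sum_consec g (x # y # xs) = g x y + sum_consec g (y # xs)"

lemma sum_consec_conv_sum: "(\<Sum>i < length p - 1. g (p ! i) (p ! Suc i)) = sum_consec g p"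
proof (induction g p rule: sum_consec.induct)
  case (3 g x y xs)
  have "(\<Sum>i < length (x # y # xs) - 1. g ((x # y # xs) ! i) ((x # y # xs) ! Suc i))
      = g x y + (\<Sum>i < length (y # xs) - 1. g ((y # xs) ! i) ((y # xs) ! Suc i))"
    by (simp add: sum.lessThan_Suc_shift del: sum.lessThan_Suc)
  then show ?case using 3 by simp
qed auto

lemma sum_consec_append:
  assumes "p \<noteq> []" "q \<noteq> []" "last p = hd q"
  shows "sum_consec g (p @ tl q) = sum_consec g p + sum_consec g q"
  using assms
proof (induction g p rule: sum_consec.induct)
  case (2 g x)
  then show ?case by (cases q) auto
qed (auto simp: add.assoc)

lemma sum_consec_rev:
  assumes "\<And>a b. g a b = g b a"
  shows "sum_consec g (rev p) = sum_consec g p"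
  using assms
proof (induction g p rule: sum_consec.induct)
  case (3 g' x y xs)
  have "sum_consec g' (rev (x # y # xs)) = sum_consec g' (rev (y # xs) @ tl [y, x])" by simp
  also have "\<dots> = sum_consec g' (rev (y # xs)) + sum_consec g' [y, x]"
    by (rule sum_consec_append) auto
  finally show ?case using 3 by (simp add: add.commute)
qed auto

lemma sum_power_abs_diff_le:
  fixes \<mu> :: real
  assumes "0 < \<mu>" "\<mu> < 1"
  shows "(\<Sum>t<n. \<mu> ^ nat \<bar>int t - int D\<bar>) \<le> 2 / (1 - \<mu>)"
proof -
  have geometric: "(\<Sum>j<k. \<mu> ^ j) \<le> 1 / (1 - \<mu>)" for k
    using assms by (simp add: sum_gp_strict divide_right_mono)
  have "(\<Sum>t<n. \<mu> ^ nat \<bar>int t - int D\<bar>) \<le> 1 / (1 - \<mu>) + (\<Sum>j<D. \<mu> ^ Suc j)"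
  proof (induction D arbitrary: n)
    case 0
    then show ?case using geometric by simp
  next
    case (Suc D)
    show ?case
    proof (cases n)
      case 0
      have "0 \<le> (\<Sum>j<Suc D. \<mu> ^ Suc j)" using assms by (intro sum_nonneg) simp
      then show ?thesis using 0 assms by simp
    next
      case (Suc n')
      have "(\<Sum>t<n. \<mu> ^ nat \<bar>int t - int (Suc D)\<bar>) = \<mu> ^ Suc D + (\<Sum>t<n'. \<mu> ^ nat \<bar>int t - int D\<bar>)"
        unfolding Suc by (subst sum.lessThan_Suc_shift) (simp add: nat_add_distrib)
      then show ?thesis using Suc.IH[of n'] by simp
    qed
  qed
  moreover have "(\<Sum>j<D. \<mu> ^ Suc j) \<le> (\<Sum>j<D. \<mu> ^ j)"
    using assms by (intro sum_mono) (simp add: power_decreasing)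
  ultimately show ?thesis using geometric[of D] by simp
qed

lemma koenig_limit_path:
  fixes P :: "nat \<Rightarrow> 'a list" and F :: "'a \<Rightarrow> 'a set"
  assumes start: "\<And>n. take 1 (P n) = [x\<^sub>0]"
    and branch: "\<And>n k. Suc k < length (P n) \<Longrightarrow> P n ! Suc k \<in> F (P n ! k)"
    and finite_F: "\<And>x. finite (F x)"
    and long: "\<And>k. finite {n. length (P n) \<le> k}"
  shows "\<exists>\<alpha>. \<forall>k N. \<exists>n\<ge>N. k < length (P n) \<and> (\<forall>i\<le>k. P n ! i = \<alpha> i)"
proof -
  define starting where "starting k q = {n. k < length (P n) \<and> take (Suc k) (P n) = q}" for k q
  (* A prefix q of length k + 1 is shared if infinitely many of the long paths start with it;
     since only the finitely many vertices in F (last q) can follow it, some one-vertex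
     extension of a shared prefix is again shared. *)
  define shared where "shared k q \<longleftrightarrow> length q = Suc k \<and> infinite (starting k q)" for k q
  have "shared 0 [x\<^sub>0]"
  proof -
    have "take (Suc 0) (P n) = [x\<^sub>0]" for n using start[of n] by simp
    then have "starting 0 [x\<^sub>0] = UNIV - {n. length (P n) \<le> 0}"
      unfolding starting_def by auto
    then show ?thesis using long[of 0] unfolding shared_def by auto
  qed
  moreover have "\<exists>y. shared (Suc k) (q @ [y])" if "shared k q" for k q
  proof -
    let ?A = "starting k q - {n. length (P n) \<le> Suc k}"
    have "infinite ?A" using that long[of "Suc k"] unfolding shared_def by auto
    moreover have "finite ((\<lambda>n. P n ! Suc k) ` ?A)"
    proof (rule finite_subset[OF _ finite_F])
      show "(\<lambda>n. P n ! Suc k) ` ?A \<subseteq> F (last q)"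
      proof (rule image_subsetI)
        fix n assume "n \<in> ?A"
        then have n: "n \<in> starting k q" "Suc k < length (P n)" by auto
        then have "last q = P n ! k" using that unfolding starting_def shared_def
          by (auto simp: take_Suc_conv_app_nth)
        then show "P n ! Suc k \<in> F (last q)" using branch n(2) by simp
      qed
    qed
    ultimately obtain y where y: "infinite ((\<lambda>n. P n ! Suc k) -` {y} \<inter> ?A)"
      using inf_img_fin_dom' by blast
    have "(\<lambda>n. P n ! Suc k) -` {y} \<inter> ?A \<subseteq> starting (Suc k) (q @ [y])"
      unfolding starting_def by (auto simp: take_Suc_conv_app_nth)
    then have "infinite (starting (Suc k) (q @ [y]))" using y infinite_super by blast
    then show ?thesis using that unfolding shared_def by auto
  qed
  ultimately have "\<exists>f. \<forall>k. shared k (f k) \<and> (\<exists>y. f (Suc k) = f k @ [y])"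
    by (intro dependent_nat_choice) blast+
  then obtain f where f: "\<And>k. shared k (f k)" and f_Suc: "\<And>k. \<exists>y. f (Suc k) = f k @ [y]"
    by blast
  have f_prefix: "f j ! i = f i ! i" if "i \<le> j" for i j
    using that
  proof (induction j)
    case (Suc j)
    show ?case
    proof (cases "i = Suc j")
      case False
      then have "i < length (f j)" using Suc.prems f[of j] unfolding shared_def by simp
      then show ?thesis using Suc False f_Suc[of j] by (auto simp: nth_append)
    qed simp
  qed simp
  show ?thesis
  proof (intro exI[of _ "\<lambda>i. f i ! i"] allI)
    fix k N
    obtain n where n: "n \<ge> N" "n \<in> starting k (f k)"
      using f[of k] unfolding shared_def infinite_nat_iff_unbounded_le by blast
    have "P n ! i = f i ! i" if "i \<le> k" for i
    proof -
      have "P n ! i = take (Suc k) (P n) ! i" using that by simp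
      also have "\<dots> = f k ! i" using n(2) unfolding starting_def by simp
      finally show ?thesis using f_prefix[OF that] by simp
    qed
    then show "\<exists>n\<ge>N. k < length (P n) \<and> (\<forall>i\<le>k. P n ! i = f i ! i)"
      using n unfolding starting_def by blast
  qed
qed

section \<open>Walks and the word metric\<close>

lemma cay_walk_iff_successively:
  "cay_walk G S p \<longleftrightarrow> p \<noteq> [] \<and> set p \<subseteq> carrier G \<and> successively (cay_adj G S) p"
  unfolding cay_walk_def successively_conv_nth by auto

lemma cay_walk_join:
  assumes "cay_walk G S p" "cay_walk G S q" "last p = hd q"
  shows "cay_walk G S (p @ tl q)" "hd (p @ tl q) = hd p" "last (p @ tl q) = last q"
    "length (p @ tl q) = length p + length q - 1"
proof -
  obtain y q' where q: "q = y # q'" using assms(2) by (cases q) (auto simp: cay_walk_def)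
  have "successively (cay_adj G S) (y # q')" "set q \<subseteq> carrier G"
    using assms(2) q unfolding cay_walk_iff_successively by auto
  then show "cay_walk G S (p @ tl q)" using assms q unfolding cay_walk_iff_successively
    by (auto simp: successively_append_iff successively_Cons)
  show "hd (p @ tl q) = hd p" using assms(1) by (simp add: cay_walk_def)
  show "last (p @ tl q) = last q" using assms q by (cases "q' = []") auto
  show "length (p @ tl q) = length p + length q - 1" using q by simp
qed

lemma cay_walk_rev: "cay_walk G S p \<Longrightarrow> cay_walk G S (rev p)"
  unfolding cay_walk_iff_successively
  by (auto simp: cay_adj_def elim!: successively_mono)

lemma cay_walk_take: "cay_walk G S p \<Longrightarrow> 0 < n \<Longrightarrow> cay_walk G S (take n p)"
  unfolding cay_walk_def by (auto dest: in_set_takeD)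

lemma cay_walk_drop: "cay_walk G S p \<Longrightarrow> n < length p \<Longrightarrow> cay_walk G S (drop n p)"
  unfolding cay_walk_def by (auto dest: in_set_dropD simp: add.commute)

lemma cay_walk_nth_carrier: "cay_walk G S p \<Longrightarrow> i < length p \<Longrightarrow> p ! i \<in> carrier G"
  unfolding cay_walk_def by (auto dest: nth_mem)

locale cayley_floyd = group G for G (structure) +
  fixes S :: "'a set" and lam :: real
  assumes finite_S: "finite S" and S_carrier: "S \<subseteq> carrier G"
    and S_generates: "generate G S = carrier G"
    and lam_pos: "0 < lam" and lam_less_1: "lam < 1"
begin

abbreviation d where "d \<equiv> word_dist G S"
abbreviation \<rho> where "\<rho> \<equiv> floyd_dist G S lam"
abbreviation flen where "flen \<equiv> floyd_len G S lam"

lemma cay_adj_mult_left: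
  assumes "a \<in> carrier G" "cay_adj G S x y" shows "cay_adj G S (a \<otimes> x) (a \<otimes> y)"
proof -
  obtain s where s: "s \<in> S" "y = x \<otimes> s \<or> x = y \<otimes> s" and xy: "x \<in> carrier G" "y \<in> carrier G"
    using assms(2) unfolding cay_adj_def by blast
  have "s \<in> carrier G" using s S_carrier by blast
  then show ?thesis unfolding cay_adj_def using s xy assms(1)
    by (intro conjI bexI[of _ s]) (auto simp: m_assoc)
qed

lemma cay_walk_mult_left:
  assumes "a \<in> carrier G" "cay_walk G S p" shows "cay_walk G S (map ((\<otimes>) a) p)"
  using assms unfolding cay_walk_def by (auto intro: cay_adj_mult_left)

lemma finite_cay_adj: "finite {y. cay_adj G S z y}"
proof (rule finite_subset)
  show "{y. cay_adj G S z y} \<subseteq> (\<lambda>s. z \<otimes> s) ` S \<union> (\<lambda>s. z \<otimes> inv s) ` S"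
  proof
    fix y assume "y \<in> {y. cay_adj G S z y}"
    then obtain s where s: "s \<in> S" "y = z \<otimes> s \<or> z = y \<otimes> s" and c: "z \<in> carrier G" "y \<in> carrier G"
      unfolding cay_adj_def by blast
    have "s \<in> carrier G" using s S_carrier by blast
    then have "y = z \<otimes> s \<or> y = z \<otimes> inv s" using s c by (auto simp: m_assoc)
    then show "y \<in> (\<lambda>s. z \<otimes> s) ` S \<union> (\<lambda>s. z \<otimes> inv s) ` S" using s by blast
  qed
qed (use finite_S in simp)

lemma cay_walk_from_one:
  assumes "g \<in> generate G S" shows "\<exists>p. cay_walk G S p \<and> hd p = \<one> \<and> last p = g"
  using assms
proof (induction rule: generate.induct)
  case one
  then show ?case by (intro exI[of _ "[\<one>]"]) (auto simp: cay_walk_def)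
next
  case (incl h)
  then have "cay_adj G S \<one> h" using S_carrier unfolding cay_adj_def by force
  then show ?case by (intro exI[of _ "[\<one>, h]"]) (auto simp: cay_walk_def cay_adj_def less_Suc_eq)
next
  case (inv h)
  then have "cay_adj G S \<one> (inv h)" using S_carrier unfolding cay_adj_def by force
  then show ?case by (intro exI[of _ "[\<one>, inv h]"]) (auto simp: cay_walk_def cay_adj_def less_Suc_eq)
next
  case (eng h1 h2)
  then obtain p q where p: "cay_walk G S p" "hd p = \<one>" "last p = h1"
    and q: "cay_walk G S q" "hd q = \<one>" "last q = h2" by blast
  have h1: "h1 \<in> carrier G" using p unfolding cay_walk_def by auto
  let ?q = "map ((\<otimes>) h1) q"
  have "cay_walk G S ?q" "hd ?q = h1" "last ?q = h1 \<otimes> h2"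
    using cay_walk_mult_left[OF h1 q(1)] q h1 unfolding cay_walk_def by (auto simp: hd_map last_map)
  then show ?case using cay_walk_join[OF p(1), of ?q] p by (intro exI[of _ "p @ tl ?q"]) simp
qed

lemma cay_walk_exists:
  assumes "x \<in> carrier G" "y \<in> carrier G"
  shows "\<exists>p. cay_walk G S p \<and> hd p = x \<and> last p = y"
proof -
  obtain p where p: "cay_walk G S p" "hd p = \<one>" "last p = inv x \<otimes> y"
    using cay_walk_from_one[of "inv x \<otimes> y"] S_generates assms by auto
  have "p \<noteq> []" using p(1) by (simp add: cay_walk_def)
  then have "cay_walk G S (map ((\<otimes>) x) p) \<and> hd (map ((\<otimes>) x) p) = x \<and> last (map ((\<otimes>) x) p) = y"
    using cay_walk_mult_left[OF assms(1) p(1)] p assms by (simp add: hd_map last_map m_assoc[symmetric])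
  then show ?thesis by blast
qed

lemma geodesic_walk_exists:
  assumes "x \<in> carrier G" "y \<in> carrier G"
  shows "\<exists>p. cay_walk G S p \<and> hd p = x \<and> last p = y \<and> length p = Suc (d x y)"
proof -
  obtain p where "cay_walk G S p \<and> hd p = x \<and> last p = y" using cay_walk_exists[OF assms] by blast
  then have "\<exists>n p. cay_walk G S p \<and> hd p = x \<and> last p = y \<and> length p = Suc n"
    by (metis cay_walk_def length_greater_0_conv Suc_pred)
  then show ?thesis unfolding word_dist_def by (rule LeastI_ex)
qed

lemma word_dist_less_length:
  assumes "cay_walk G S p" "hd p = x" "last p = y"
  shows "d x y < length p"
proof -
  have "length p = Suc (length p - 1)" using assms by (simp add: cay_walk_def)
  then have "d x y \<le> length p - 1" unfolding word_dist_def
    by (metis (mono_tags, lifting) Least_le assms)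
  then show ?thesis using assms unfolding cay_walk_def by (cases p) auto
qed

lemma word_dist_sym:
  assumes "x \<in> carrier G" "y \<in> carrier G" shows "d x y = d y x"
proof -
  have "d y x \<le> d x y" if xy: "x \<in> carrier G" "y \<in> carrier G" for x y
  proof -
    obtain p where p: "cay_walk G S p" "hd p = x" "last p = y" "length p = Suc (d x y)"
      using geodesic_walk_exists[OF xy] by blast
    have "p \<noteq> []" using p(1) by (simp add: cay_walk_def)
    then have "hd (rev p) = y" "last (rev p) = x" using p by (auto simp: hd_rev last_rev)
    then have "d y x < length (rev p)" using word_dist_less_length[OF cay_walk_rev[OF p(1)]] by simp
    then show ?thesis using p by simp
  qed
  from this[OF assms] this[OF assms(2) assms(1)] show ?thesis by linarith
qed

lemma word_dist_triangle:
  assumes "x \<in> carrier G" "y \<in> carrier G" "z \<in> carrier G"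
  shows "d x z \<le> d x y + d y z"
proof -
  obtain p where p: "cay_walk G S p" "hd p = x" "last p = y" "length p = Suc (d x y)"
    using geodesic_walk_exists assms by blast
  obtain q where q: "cay_walk G S q" "hd q = y" "last q = z" "length q = Suc (d y z)"
    using geodesic_walk_exists assms by blast
  have "d x z < length (p @ tl q)"
    using word_dist_less_length[OF cay_walk_join(1)[OF p(1) q(1)]] cay_walk_join(2-4)[OF p(1) q(1)] p q
    by simp
  then show ?thesis using p q by simp
qed

lemma word_dist_eq_0:
  assumes "x \<in> carrier G" "y \<in> carrier G" "d x y = 0" shows "x = y"
proof -
  obtain p where p: "hd p = x" "last p = y" "length p = Suc 0"
    using geodesic_walk_exists[OF assms(1,2)] assms(3) by auto
  then obtain a where "p = [a]" by (auto simp: length_Suc_conv)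
  then show ?thesis using p by simp
qed

lemma word_dist_eq_1:
  assumes "x \<in> carrier G" "y \<in> carrier G" "d x y = 1" shows "cay_adj G S x y"
proof -
  obtain p where p: "cay_walk G S p" "hd p = x" "last p = y" "length p = Suc (Suc 0)"
    using geodesic_walk_exists[OF assms(1,2)] assms(3) by auto
  then obtain a b where "p = [a, b]" by (auto simp: length_Suc_conv)
  then show ?thesis using p unfolding cay_walk_def by auto
qed

lemma word_dist_nth_le:
  assumes "cay_walk G S p" "i \<le> j" "j < length p"
  shows "d (p ! i) (p ! j) \<le> j - i"
proof -
  let ?q = "drop i (take (Suc j) p)"
  have "cay_walk G S ?q"
    using assms by (intro cay_walk_drop cay_walk_take) auto
  moreover have "hd ?q = p ! i"
    using assms by (simp add: hd_drop_conv_nth)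
  moreover have "last ?q = p ! j"
    using assms by (simp add: take_Suc_conv_app_nth)
  ultimately have "d (p ! i) (p ! j) < length ?q" by (rule word_dist_less_length)
  then show ?thesis using assms by simp
qed

lemma geodesic_walk_dist:
  assumes "cay_walk G S p" "length p = Suc (d (hd p) (last p))" "i \<le> j" "j < length p"
  shows "d (p ! i) (p ! j) = j - i"
proof -
  define L where "L = length p - 1"
  have "p \<noteq> []" using assms(1) by (simp add: cay_walk_def)
  then have L: "L < length p" "d (p ! 0) (p ! L) = L"
    using assms(2) unfolding L_def by (simp_all add: hd_conv_nth last_conv_nth)
  have c: "p ! 0 \<in> carrier G" "p ! i \<in> carrier G" "p ! j \<in> carrier G" "p ! L \<in> carrier G"
    using cay_walk_nth_carrier[OF assms(1)] assms L(1) by auto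
  have "d (p ! 0) (p ! L) \<le> d (p ! 0) (p ! i) + d (p ! i) (p ! L)"
    using word_dist_triangle[OF c(1,2,4)] .
  also have "\<dots> \<le> d (p ! 0) (p ! i) + (d (p ! i) (p ! j) + d (p ! j) (p ! L))"
    using word_dist_triangle[OF c(2-4)] by simp
  also have "\<dots> \<le> i + d (p ! i) (p ! j) + (L - j)"
    using word_dist_nth_le[OF assms(1), of 0 i] word_dist_nth_le[OF assms(1), of j L] assms L
    unfolding L_def by simp
  finally have "j - i \<le> d (p ! i) (p ! j)" using L(2) assms(3,4) unfolding L_def by linarith
  then show ?thesis using word_dist_nth_le[OF assms(1,3,4)] by simp
qed

section \<open>The Floyd metric\<close>

lemma floyd_len_conv_sum_consec: "flen b p = sum_consec (\<lambda>x y. lam ^ min (d b x) (d b y)) p"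
  unfolding floyd_len_def by (rule sum_consec_conv_sum)

lemma floyd_len_nonneg: "0 \<le> flen b p"
  unfolding floyd_len_def using lam_pos by (intro sum_nonneg) simp

lemma floyd_dist_le_len:
  assumes "cay_walk G S p" "hd p = x" "last p = y"
  shows "\<rho> b x y \<le> flen b p"
  unfolding floyd_dist_def using assms floyd_len_nonneg
  by (intro cInf_lower) (auto intro: bdd_belowI[of _ 0])

lemma floyd_dist_greatest:
  assumes "x \<in> carrier G" "y \<in> carrier G"
    and "\<And>p. cay_walk G S p \<Longrightarrow> hd p = x \<Longrightarrow> last p = y \<Longrightarrow> c \<le> flen b p"
  shows "c \<le> \<rho> b x y"
  unfolding floyd_dist_def using cay_walk_exists[OF assms(1,2)] assms(3)
  by (intro cInf_greatest) auto

lemma floyd_dist_nonneg: "x \<in> carrier G \<Longrightarrow> y \<in> carrier G \<Longrightarrow> 0 \<le> \<rho> b x y"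
  using floyd_dist_greatest floyd_len_nonneg by metis

lemma floyd_dist_refl: "x \<in> carrier G \<Longrightarrow> \<rho> b x x = 0"
  using floyd_dist_le_len[of "[x]" x x b] floyd_dist_nonneg[of x x b]
  by (simp add: cay_walk_def floyd_len_def)

lemma floyd_dist_triangle:
  assumes "x \<in> carrier G" "y \<in> carrier G" "z \<in> carrier G"
  shows "\<rho> b x z \<le> \<rho> b x y + \<rho> b y z"
proof -
  have "\<rho> b x z - flen b q \<le> \<rho> b x y"
    if q: "cay_walk G S q" "hd q = y" "last q = z" for q
  proof (rule floyd_dist_greatest[OF assms(1,2)])
    fix p assume p: "cay_walk G S p" "hd p = x" "last p = y"
    have ne: "p \<noteq> []" "q \<noteq> []" using p q by (auto simp: cay_walk_def)
    have "flen b (p @ tl q) = flen b p + flen b q"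
      unfolding floyd_len_conv_sum_consec using sum_consec_append[OF ne] p q by simp
    moreover have "\<rho> b x z \<le> flen b (p @ tl q)"
      using floyd_dist_le_len cay_walk_join[OF p(1) q(1)] p q by simp
    ultimately show "\<rho> b x z - flen b q \<le> flen b p" by simp
  qed
  then have "\<rho> b x z - \<rho> b x y \<le> \<rho> b y z"
    by (intro floyd_dist_greatest[OF assms(2,3)]) force
  then show ?thesis by simp
qed

lemma floyd_dist_sym:
  assumes "x \<in> carrier G" "y \<in> carrier G" shows "\<rho> b x y = \<rho> b y x"
proof -
  have "\<rho> b y x \<le> \<rho> b x y" if xy: "x \<in> carrier G" "y \<in> carrier G" for x y
  proof (rule floyd_dist_greatest[OF xy])
    fix p assume p: "cay_walk G S p" "hd p = x" "last p = y"
    have "p \<noteq> []" using p by (auto simp: cay_walk_def)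
    then have "\<rho> b y x \<le> flen b (rev p)"
      using floyd_dist_le_len[OF cay_walk_rev[OF p(1)]] p by (simp add: hd_rev last_rev)
    also have "\<dots> = flen b p"
      unfolding floyd_len_conv_sum_consec by (rule sum_consec_rev) (simp add: min.commute)
    finally show "\<rho> b y x \<le> flen b p" .
  qed
  from this[OF assms] this[OF assms(2) assms(1)] show ?thesis by linarith
qed

(* Moving the base point from b to b' lowers the exponent of every edge by at most d b b'. *)
lemma floyd_dist_change_base:
  assumes "b \<in> carrier G" "b' \<in> carrier G" "x \<in> carrier G" "y \<in> carrier G"
  shows "\<rho> b' x y \<le> \<rho> b x y / lam ^ d b b'"
proof -
  have "lam ^ d b b' * \<rho> b' x y \<le> \<rho> b x y"
  proof (rule floyd_dist_greatest[OF assms(3,4)])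
    fix p assume p: "cay_walk G S p" "hd p = x" "last p = y"
    have "lam ^ d b b' * lam ^ min (d b' (p ! i)) (d b' (p ! Suc i))
        \<le> lam ^ min (d b (p ! i)) (d b (p ! Suc i))" if i: "i < length p - 1" for i
    proof -
      have c: "p ! i \<in> carrier G" "p ! Suc i \<in> carrier G"
        using cay_walk_nth_carrier[OF p(1)] i by auto
      have "min (d b (p ! i)) (d b (p ! Suc i)) \<le> d b b' + min (d b' (p ! i)) (d b' (p ! Suc i))"
        using word_dist_triangle[OF assms(1,2) c(1)] word_dist_triangle[OF assms(1,2) c(2)] by linarith
      then show ?thesis using lam_pos lam_less_1 by (simp add: power_add[symmetric] power_decreasing)
    qed
    then have "lam ^ d b b' * flen b' p \<le> flen b p"
      unfolding floyd_len_def sum_distrib_left by (intro sum_mono) auto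
    moreover have "lam ^ d b b' * \<rho> b' x y \<le> lam ^ d b b' * flen b' p"
      using floyd_dist_le_len[OF p] lam_pos by (simp add: mult_left_mono)
    ultimately show "lam ^ d b b' * \<rho> b' x y \<le> flen b p" by linarith
  qed
  then show ?thesis using lam_pos by (simp add: pos_le_divide_eq mult.commute)
qed

lemma floyd_len_le_geometric:
  assumes "cay_walk G S p" "\<And>i. i < length p \<Longrightarrow> c + i \<le> d b (p ! i)"
  shows "flen b p \<le> lam ^ c / (1 - lam)"
proof -
  have "flen b p \<le> (\<Sum>i < length p - 1. lam ^ c * lam ^ i)"
    unfolding floyd_len_def
  proof (intro sum_mono)
    fix i assume "i \<in> {..<length p - 1}"
    then have "c + i \<le> min (d b (p ! i)) (d b (p ! Suc i))"
      using assms(2)[of i] assms(2)[of "Suc i"] by fastforce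
    then show "lam ^ min (d b (p ! i)) (d b (p ! Suc i)) \<le> lam ^ c * lam ^ i"
      using lam_pos lam_less_1 by (simp add: power_add[symmetric] power_decreasing)
  qed
  also have "\<dots> = lam ^ c * (\<Sum>i < length p - 1. lam ^ i)" by (simp add: sum_distrib_left)
  also have "\<dots> \<le> lam ^ c * (1 / (1 - lam))"
    using lam_pos lam_less_1 by (intro mult_left_mono) (simp_all add: sum_gp_strict divide_right_mono)
  finally show ?thesis by simp
qed

lemma floyd_dist_le_word_dist:
  assumes "b \<in> carrier G" "x \<in> carrier G" "y \<in> carrier G"
  shows "\<rho> b x y \<le> d x y * (lam ^ d b x / lam ^ d x y)"
proof -
  obtain p where p: "cay_walk G S p" "hd p = x" "last p = y" "length p = Suc (d x y)"
    using geodesic_walk_exists assms(2,3) by blast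
  have x: "p ! 0 = x" using p(1,2) by (auto simp: cay_walk_def hd_conv_nth)
  have "flen b p \<le> (\<Sum>i < length p - 1. lam ^ d b x / lam ^ d x y)"
    unfolding floyd_len_def
  proof (intro sum_mono)
    fix i assume i: "i \<in> {..<length p - 1}"
    have c: "p ! i \<in> carrier G" "p ! Suc i \<in> carrier G"
      using cay_walk_nth_carrier[OF p(1)] i by auto
    have "d x (p ! i) \<le> d x y" "d x (p ! Suc i) \<le> d x y"
      using word_dist_nth_le[OF p(1), of 0 i] word_dist_nth_le[OF p(1), of 0 "Suc i"] i p(4) x
      by auto
    then have "d b x \<le> min (d b (p ! i)) (d b (p ! Suc i)) + d x y"
      using word_dist_triangle[OF assms(1) c(1) assms(2)] word_dist_triangle[OF assms(1) c(2) assms(2)]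
        word_dist_sym[OF assms(2) c(1)] word_dist_sym[OF assms(2) c(2)] by linarith
    then have "lam ^ min (d b (p ! i)) (d b (p ! Suc i)) * lam ^ d x y \<le> lam ^ d b x"
      using lam_pos lam_less_1 by (simp add: power_add[symmetric] power_decreasing)
    then show "lam ^ min (d b (p ! i)) (d b (p ! Suc i)) \<le> lam ^ d b x / lam ^ d x y"
      using lam_pos by (simp add: pos_le_divide_eq)
  qed
  also have "\<dots> = d x y * (lam ^ d b x / lam ^ d x y)" using p by simp
  finally show ?thesis using floyd_dist_le_len[OF p(1-3), of b] by linarith
qed

section \<open>Geodesic rays and the Floyd completion\<close>

lemma geod_ray_carrier: "geod_ray G S x \<alpha> \<Longrightarrow> \<alpha> i \<in> carrier G"
  unfolding geod_ray_def by blast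

lemma geod_ray_dist: "geod_ray G S x \<alpha> \<Longrightarrow> i \<le> j \<Longrightarrow> d (\<alpha> i) (\<alpha> j) = j - i"
  unfolding geod_ray_def by (metis abs_of_nonpos diff_le_0_iff_le minus_diff_eq of_nat_diff of_nat_eq_iff of_nat_mono)

lemma geod_ray_dist_start: "geod_ray G S x \<alpha> \<Longrightarrow> d x (\<alpha> j) = j"
  using geod_ray_dist[of x \<alpha> 0 j] unfolding geod_ray_def by auto

lemma geod_ray_walk:
  assumes "geod_ray G S x \<alpha>"
  shows "cay_walk G S (map (\<lambda>k. \<alpha> (i + k)) [0..<Suc m])"
proof -
  have "cay_adj G S (\<alpha> t) (\<alpha> (Suc t))" for t
    using word_dist_eq_1[OF geod_ray_carrier[OF assms] geod_ray_carrier[OF assms]]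
      geod_ray_dist[OF assms, of t "Suc t"] by simp
  then show ?thesis unfolding cay_walk_def using geod_ray_carrier[OF assms]
    by (auto simp del: upt_Suc)
qed

lemma floyd_dist_geod_ray_tail:
  assumes "geod_ray G S \<one> \<alpha>" "i \<le> n"
  shows "\<rho> \<one> (\<alpha> i) (\<alpha> n) \<le> lam ^ i / (1 - lam)"
proof -
  let ?p = "map (\<lambda>k. \<alpha> (i + k)) [0..<Suc (n - i)]"
  have "\<rho> \<one> (\<alpha> i) (\<alpha> n) \<le> flen \<one> ?p"
    by (rule floyd_dist_le_len[OF geod_ray_walk[OF assms(1)]])
      (use assms(2) in \<open>auto simp: hd_map last_map simp del: upt_Suc\<close>)
  also have "\<dots> \<le> lam ^ i / (1 - lam)"
    by (rule floyd_len_le_geometric[OF geod_ray_walk[OF assms(1)]])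
      (simp add: geod_ray_dist_start[OF assms(1)] del: upt_Suc)
  finally show ?thesis .
qed

lemma floyd_dist_quadrilateral:
  assumes "x \<in> carrier G" "y \<in> carrier G" "x' \<in> carrier G" "y' \<in> carrier G"
  shows "\<bar>\<rho> b x y - \<rho> b x' y'\<bar> \<le> \<rho> b x x' + \<rho> b y y'"
  using floyd_dist_triangle[of x x' y b] floyd_dist_triangle[of x' y' y b]
    floyd_dist_triangle[of x' x y' b] floyd_dist_triangle[of x y y' b]
    floyd_dist_sym[of x x' b] floyd_dist_sym[of y y' b] assms
  by (simp add: abs_le_iff)

lemma floyd_cauchy_carrier: "floyd_cauchy G S lam x \<Longrightarrow> x n \<in> carrier G"
  unfolding floyd_cauchy_def by blast

lemma floyd_cauchy_const: "x \<in> carrier G \<Longrightarrow> floyd_cauchy G S lam (\<lambda>_. x)"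
  unfolding floyd_cauchy_def using floyd_dist_refl by simp

lemma floyd_boundary_cauchy: "\<xi> \<in> floyd_boundary G S lam \<Longrightarrow> floyd_cauchy G S lam \<xi>"
  unfolding floyd_boundary_def by blast

lemma floyd_cauchy_change_base:
  assumes "floyd_cauchy G S lam x" "b \<in> carrier G" "0 < e"
  shows "\<exists>N. \<forall>m\<ge>N. \<forall>n\<ge>N. \<rho> b (x m) (x n) < e"
proof -
  have K: "0 < lam ^ d \<one> b" using lam_pos by simp
  then obtain N where N: "\<And>m n. m \<ge> N \<Longrightarrow> n \<ge> N \<Longrightarrow> \<rho> \<one> (x m) (x n) < e * lam ^ d \<one> b"
    using assms(1,3) unfolding floyd_cauchy_def by (meson mult_pos_pos)
  have "\<rho> b (x m) (x n) < e" if "m \<ge> N" "n \<ge> N" for m n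
  proof -
    have "\<rho> b (x m) (x n) \<le> \<rho> \<one> (x m) (x n) / lam ^ d \<one> b"
      using floyd_dist_change_base floyd_cauchy_carrier[OF assms(1)] assms(2) by simp
    also have "\<dots> < e" using N[OF that] K by (simp add: divide_less_eq)
    finally show ?thesis .
  qed
  then show ?thesis by blast
qed

(* floyd_dist_ext is a lim, which carries information only for convergent sequences. *)
lemma floyd_dist_ext_tendsto:
  assumes x: "floyd_cauchy G S lam x" and y: "floyd_cauchy G S lam y" and b: "b \<in> carrier G"
  shows "(\<lambda>n. \<rho> b (x n) (y n)) \<longlonglongrightarrow> floyd_dist_ext G S lam b x y"
proof -
  have "Cauchy (\<lambda>n. \<rho> b (x n) (y n))"
  proof (rule CauchyI)
    fix e :: real assume "0 < e"
    then obtain N1 N2 where N1: "\<And>m n. m \<ge> N1 \<Longrightarrow> n \<ge> N1 \<Longrightarrow> \<rho> b (x m) (x n) < e / 2"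
      and N2: "\<And>m n. m \<ge> N2 \<Longrightarrow> n \<ge> N2 \<Longrightarrow> \<rho> b (y m) (y n) < e / 2"
      using floyd_cauchy_change_base[OF x b] floyd_cauchy_change_base[OF y b] by (meson half_gt_zero)
    have "norm (\<rho> b (x m) (y m) - \<rho> b (x n) (y n)) < e" if "max N1 N2 \<le> m" "max N1 N2 \<le> n" for m n
      using floyd_dist_quadrilateral[of "x m" "y m" "x n" "y n" b] N1[of m n] N2[of m n] that
        floyd_cauchy_carrier[OF x] floyd_cauchy_carrier[OF y] by simp
    then show "\<exists>M. \<forall>m\<ge>M. \<forall>n\<ge>M. norm (\<rho> b (x m) (y m) - \<rho> b (x n) (y n)) < e" by blast
  qed
  then show ?thesis
    unfolding floyd_dist_ext_def by (simp add: Cauchy_convergent_iff convergent_LIMSEQ_iff)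
qed

lemma floyd_dist_ext_le:
  assumes "floyd_cauchy G S lam x" "floyd_cauchy G S lam y" "b \<in> carrier G"
    and "c \<longlonglongrightarrow> L" "\<forall>\<^sub>F n in sequentially. \<rho> b (x n) (y n) \<le> c n"
  shows "floyd_dist_ext G S lam b x y \<le> L"
  using tendsto_le[OF _ assms(4) floyd_dist_ext_tendsto[OF assms(1-3)] assms(5)] by simp

section \<open>Shadows inside balls\<close>

lemma floyd_dist_geod_rays_near:
  assumes \<gamma>: "geod_ray G S \<one> \<gamma>" and \<beta>: "geod_ray G S \<one> \<beta>"
    and near: "d (\<beta> i) (\<gamma> j) \<le> M" and n: "max i j \<le> n"
  shows "\<rho> \<one> (\<gamma> n) (\<beta> n) \<le> lam ^ j * (1 / (1 - lam) + M / lam ^ M + 1 / (lam ^ M * (1 - lam)))"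
proof -
  define e where "e = d (\<gamma> j) (\<beta> i)"
  have c: "\<gamma> j \<in> carrier G" "\<gamma> n \<in> carrier G" "\<beta> i \<in> carrier G" "\<beta> n \<in> carrier G"
    using geod_ray_carrier \<gamma> \<beta> by blast+
  have eM: "e \<le> M" using near word_dist_sym[OF c(1,3)] unfolding e_def by simp
  have lamM: "lam ^ M \<le> lam ^ e" "0 < lam ^ M"
    using eM lam_pos lam_less_1 by (simp_all add: power_decreasing)
  have "j \<le> i + e"
    using word_dist_triangle[OF one_closed c(3,1)] geod_ray_dist_start[OF \<gamma>] geod_ray_dist_start[OF \<beta>]
      word_dist_sym[OF c(1,3)] unfolding e_def by simp
  then have "lam ^ i * lam ^ e \<le> lam ^ j"
    using lam_pos lam_less_1 by (simp add: power_add[symmetric] power_decreasing)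
  then have "lam ^ i \<le> lam ^ j / lam ^ e"
    using lam_pos by (simp add: pos_le_divide_eq)
  also have "\<dots> \<le> lam ^ j / lam ^ M"
    using lamM lam_pos by (intro divide_left_mono) auto
  finally have "lam ^ i / (1 - lam) \<le> lam ^ j / lam ^ M / (1 - lam)"
    using lam_less_1 by (intro divide_right_mono) auto
  then have tail_\<beta>: "\<rho> \<one> (\<beta> i) (\<beta> n) \<le> lam ^ j / lam ^ M / (1 - lam)"
    using floyd_dist_geod_ray_tail[OF \<beta>, of i n] n by linarith
  have "\<rho> \<one> (\<gamma> j) (\<beta> i) \<le> e * (lam ^ j / lam ^ e)"
    using floyd_dist_le_word_dist[OF one_closed c(1,3)] geod_ray_dist_start[OF \<gamma>] unfolding e_def by simp
  also have "\<dots> \<le> M * (lam ^ j / lam ^ M)"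
    using eM lamM lam_pos by (intro mult_mono divide_left_mono) auto
  finally have middle: "\<rho> \<one> (\<gamma> j) (\<beta> i) \<le> M * (lam ^ j / lam ^ M)" .
  have tail_\<gamma>: "\<rho> \<one> (\<gamma> n) (\<gamma> j) \<le> lam ^ j / (1 - lam)"
    using floyd_dist_geod_ray_tail[OF \<gamma>, of j n] n floyd_dist_sym[OF c(1,2)] by simp
  have "\<rho> \<one> (\<gamma> n) (\<beta> n) \<le> \<rho> \<one> (\<gamma> n) (\<gamma> j) + \<rho> \<one> (\<gamma> j) (\<beta> i) + \<rho> \<one> (\<beta> i) (\<beta> n)"
    using floyd_dist_triangle[OF c(2,1,4), of \<one>] floyd_dist_triangle[OF c(1,3,4), of \<one>] by simp
  also have "\<dots> \<le> lam ^ j / (1 - lam) + M * (lam ^ j / lam ^ M) + lam ^ j / lam ^ M / (1 - lam)"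
    using tail_\<gamma> middle tail_\<beta> by simp
  finally show ?thesis by (simp add: field_simps)
qed

lemma shadow_subset_floyd_ball:
  assumes "0 < R"
  shows "\<exists>C1>0. \<forall>\<xi> \<gamma> v. \<xi> \<in> floyd_boundary G S lam \<and> geod_to G S lam \<one> \<xi> \<gamma> \<and> v \<in> range \<gamma> \<longrightarrow>
            shadow G S lam \<one> v R \<subseteq> floyd_ball G S lam \<xi> (C1 * lam ^ d \<one> v)"
proof -
  define M where "M = nat \<lceil>R\<rceil>"
  define K where "K = 1 / (1 - lam) + M / lam ^ M + 1 / (lam ^ M * (1 - lam))"
  have "0 \<le> K" unfolding K_def using lam_pos lam_less_1 by simp
  moreover have "\<eta> \<in> floyd_ball G S lam \<xi> ((K + 1) * lam ^ d \<one> v)"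
    if \<xi>: "\<xi> \<in> floyd_boundary G S lam" and \<gamma>: "geod_to G S lam \<one> \<xi> \<gamma>" and "v \<in> range \<gamma>"
      and \<eta>: "\<eta> \<in> shadow G S lam \<one> v R" for \<xi> \<gamma> v \<eta>
  proof -
    obtain j where v: "v = \<gamma> j" using \<open>v \<in> range \<gamma>\<close> by blast
    obtain \<beta> i where \<eta>_bdry: "\<eta> \<in> floyd_boundary G S lam" and \<beta>: "geod_to G S lam \<one> \<eta> \<beta>"
      and "real (d (\<beta> i) v) \<le> R"
      using \<eta> unfolding shadow_def by blast
    then have near: "d (\<beta> i) (\<gamma> j) \<le> M" unfolding M_def v by linarith
    have cauchy: "floyd_cauchy G S lam \<xi>" "floyd_cauchy G S lam \<eta>"
      using \<xi> \<eta>_bdry floyd_boundary_cauchy by blast+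
    let ?c = "\<lambda>n. \<rho> \<one> (\<gamma> n) (\<xi> n) + \<rho> \<one> (\<beta> n) (\<eta> n) + lam ^ j * K"
    have "?c \<longlonglongrightarrow> 0 + 0 + lam ^ j * K"
      using \<gamma> \<beta> unfolding geod_to_def by (intro tendsto_intros) auto
    moreover have "\<forall>\<^sub>F n in sequentially. \<rho> \<one> (\<xi> n) (\<eta> n) \<le> ?c n"
      unfolding eventually_sequentially
    proof (intro exI[of _ "max i j"] allI impI)
      fix n assume "max i j \<le> n"
      have c: "\<xi> n \<in> carrier G" "\<eta> n \<in> carrier G" "\<gamma> n \<in> carrier G" "\<beta> n \<in> carrier G"
        using cauchy floyd_cauchy_carrier \<gamma> \<beta> geod_ray_carrier unfolding geod_to_def by blast+
      have "\<rho> \<one> (\<xi> n) (\<eta> n) \<le> \<rho> \<one> (\<gamma> n) (\<xi> n) + \<rho> \<one> (\<gamma> n) (\<beta> n) + \<rho> \<one> (\<beta> n) (\<eta> n)"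
        using floyd_dist_triangle[OF c(1,3,2), of \<one>] floyd_dist_triangle[OF c(3,4,2), of \<one>]
          floyd_dist_sym[OF c(1,3), of \<one>] by simp
      then show "\<rho> \<one> (\<xi> n) (\<eta> n) \<le> ?c n"
        using floyd_dist_geod_rays_near[of \<gamma> \<beta>, OF _ _ near \<open>max i j \<le> n\<close>] \<gamma> \<beta> unfolding geod_to_def K_def
        by simp
    qed
    ultimately have "floyd_dist_ext G S lam \<one> \<xi> \<eta> \<le> lam ^ j * K"
      by (intro floyd_dist_ext_le[OF cauchy one_closed]) auto
    also have "\<dots> < (K + 1) * lam ^ d \<one> v"
      using geod_ray_dist_start \<gamma> lam_pos unfolding v geod_to_def by (simp add: algebra_simps)
    finally show ?thesis unfolding floyd_ball_def using \<eta>_bdry by simp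
  qed
  ultimately show ?thesis by (intro exI[of _ "K + 1"]) auto
qed

section \<open>Geodesics to boundary points\<close>

lemma finite_word_ball: "finite {y \<in> carrier G. d \<one> y \<le> k}"
proof (induction k)
  case 0
  have "{y \<in> carrier G. d \<one> y \<le> 0} \<subseteq> {\<one>}" using word_dist_eq_0[of \<one>] by auto
  then show ?case by (rule finite_subset) simp
next
  case (Suc k)
  let ?B = "{y \<in> carrier G. d \<one> y \<le> k}"
  have "{y \<in> carrier G. d \<one> y \<le> Suc k} \<subseteq> ?B \<union> (\<Union>z\<in>?B. {y. cay_adj G S z y})"
  proof
    fix y assume y: "y \<in> {y \<in> carrier G. d \<one> y \<le> Suc k}"
    show "y \<in> ?B \<union> (\<Union>z\<in>?B. {y. cay_adj G S z y})"
    proof (cases "d \<one> y \<le> k")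
      case False
      then obtain p where p: "cay_walk G S p" "hd p = \<one>" "last p = y" "length p = Suc (Suc k)"
        using geodesic_walk_exists[of \<one> y] y by (auto simp: le_Suc_eq)
      have "p \<noteq> []" using p(4) by auto
      then have "p ! 0 = \<one>" "p ! Suc k = y" using p by (auto simp: hd_conv_nth last_conv_nth)
      then have "d \<one> (p ! k) \<le> k" "cay_adj G S (p ! k) y"
        using word_dist_nth_le[OF p(1), of 0 k] p unfolding cay_walk_def by auto
      moreover have "p ! k \<in> carrier G" using cay_walk_nth_carrier[OF p(1)] p(4) by simp
      ultimately show ?thesis by blast
    qed (use y in blast)
  qed
  moreover have "finite (?B \<union> (\<Union>z\<in>?B. {y. cay_adj G S z y}))"
    using Suc finite_cay_adj by blast
  ultimately show ?case by (rule finite_subset)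
qed

lemma floyd_boundary_escapes:
  assumes "\<eta> \<in> floyd_boundary G S lam"
  shows "finite {n. d \<one> (\<eta> n) \<le> k}"
proof (rule ccontr)
  assume inf: "infinite {n. d \<one> (\<eta> n) \<le> k}"
  have c: "floyd_cauchy G S lam \<eta>" using assms floyd_boundary_cauchy by blast
  have "\<eta> ` {n. d \<one> (\<eta> n) \<le> k} \<subseteq> {y \<in> carrier G. d \<one> y \<le> k}"
    using floyd_cauchy_carrier[OF c] by auto
  then have "finite (\<eta> ` {n. d \<one> (\<eta> n) \<le> k})" using finite_word_ball finite_subset by blast
  then obtain g where g: "g \<in> \<eta> ` {n. d \<one> (\<eta> n) \<le> k}"
    and g_inf: "infinite (\<eta> -` {g} \<inter> {n. d \<one> (\<eta> n) \<le> k})"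
    using inf_img_fin_dom'[OF _ inf] by blast
  have gc: "g \<in> carrier G" using g floyd_cauchy_carrier[OF c] by auto
  have "(\<lambda>n. \<rho> \<one> (\<eta> n) g) \<longlonglongrightarrow> 0"
  proof (rule LIMSEQ_I)
    fix e :: real assume "0 < e"
    then obtain N where N: "\<And>m n. m \<ge> N \<Longrightarrow> n \<ge> N \<Longrightarrow> \<rho> \<one> (\<eta> m) (\<eta> n) < e"
      using c unfolding floyd_cauchy_def by meson
    obtain m where m: "m \<ge> N" "\<eta> m = g"
      using g_inf unfolding infinite_nat_iff_unbounded_le by blast
    have "norm (\<rho> \<one> (\<eta> n) g - 0) < e" if "N \<le> n" for n
      using N[OF that m(1)] m(2) floyd_dist_nonneg[OF floyd_cauchy_carrier[OF c] gc] by simp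
    then show "\<exists>N. \<forall>n\<ge>N. norm (\<rho> \<one> (\<eta> n) g - 0) < e" by blast
  qed
  then show False using assms gc unfolding floyd_boundary_def by blast
qed

lemma floyd_dist_geodesic_walk_suffix:
  assumes "cay_walk G S p" "hd p = \<one>" "length p = Suc (d \<one> (last p))" "k < length p"
  shows "\<rho> \<one> (p ! k) (last p) \<le> lam ^ k / (1 - lam)"
proof -
  have p0: "p ! 0 = \<one>" using assms(1,2) by (auto simp: cay_walk_def hd_conv_nth)
  have "\<rho> \<one> (p ! k) (last p) \<le> flen \<one> (drop k p)"
    using floyd_dist_le_len[OF cay_walk_drop[OF assms(1,4)]] assms(4) by (simp add: hd_drop_conv_nth)
  also have "\<dots> \<le> lam ^ k / (1 - lam)"
  proof (rule floyd_len_le_geometric[OF cay_walk_drop[OF assms(1,4)]])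
    fix t assume "t < length (drop k p)"
    then show "k + t \<le> d \<one> (drop k p ! t)"
      using geodesic_walk_dist[OF assms(1), of 0 "k + t"] assms(2,3) p0 by simp
  qed
  finally show ?thesis .
qed

lemma geod_ray_of_geodesic_walks:
  assumes walks: "\<And>n. cay_walk G S (P n) \<and> hd (P n) = \<one> \<and> length (P n) = Suc (d \<one> (last (P n)))"
    and limit: "\<And>k. \<exists>n. k < length (P n) \<and> (\<forall>i\<le>k. P n ! i = \<alpha> i)"
  shows "geod_ray G S \<one> \<alpha>"
proof -
  have carrier: "\<alpha> i \<in> carrier G" for i
  proof -
    obtain n where "i < length (P n)" "P n ! i = \<alpha> i" using limit[of i] by blast
    then show ?thesis using cay_walk_nth_carrier walks by metis
  qed
  have dist: "d (\<alpha> i) (\<alpha> j) = j - i" if "i \<le> j" for i j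
  proof -
    obtain n where n: "j < length (P n)" "\<forall>l\<le>j. P n ! l = \<alpha> l" using limit[of j] by blast
    then show ?thesis using geodesic_walk_dist[of "P n" i j] walks[of n] that by simp
  qed
  have "real (d (\<alpha> i) (\<alpha> j)) = \<bar>real i - real j\<bar>" for i j
  proof (cases "i \<le> j")
    case False
    then show ?thesis using dist[of j i] word_dist_sym[OF carrier carrier, of i j] by simp
  qed (simp add: dist)
  moreover have "\<alpha> 0 = \<one>"
  proof -
    obtain n where "0 < length (P n)" "P n ! 0 = \<alpha> 0" using limit[of 0] by blast
    then show ?thesis using walks[of n] hd_conv_nth[of "P n"] by force
  qed
  ultimately show ?thesis unfolding geod_ray_def using carrier by blast
qed

lemma geod_to_exists:
  assumes \<eta>: "\<eta> \<in> floyd_boundary G S lam"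
  shows "\<exists>\<alpha>. geod_to G S lam \<one> \<eta> \<alpha>"
proof -
  have c: "floyd_cauchy G S lam \<eta>" using \<eta> floyd_boundary_cauchy by blast
  have \<eta>_carrier: "\<eta> n \<in> carrier G" for n using floyd_cauchy_carrier[OF c] .
  have "\<forall>n. \<exists>p. cay_walk G S p \<and> hd p = \<one> \<and> last p = \<eta> n \<and> length p = Suc (d \<one> (\<eta> n))"
    using geodesic_walk_exists[OF one_closed \<eta>_carrier] by blast
  from choice[OF this] obtain P where P: "\<And>n. cay_walk G S (P n) \<and> hd (P n) = \<one> \<and> last (P n) = \<eta> n \<and>
      length (P n) = Suc (d \<one> (\<eta> n))"
    by blast
  have "\<exists>\<alpha>. \<forall>k N. \<exists>n\<ge>N. k < length (P n) \<and> (\<forall>i\<le>k. P n ! i = \<alpha> i)"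
  proof (rule koenig_limit_path[where F = "\<lambda>z. {y. cay_adj G S z y}"])
    show "take 1 (P n) = [\<one>]" for n
      using P[of n] by (cases "P n") (auto simp: cay_walk_def)
    show "P n ! Suc k \<in> {y. cay_adj G S (P n ! k) y}" if "Suc k < length (P n)" for n k
      using P[of n] that unfolding cay_walk_def by simp
    show "finite {y. cay_adj G S z y}" for z by (rule finite_cay_adj)
    show "finite {n. length (P n) \<le> k}" for k
    proof (rule finite_subset)
      show "{n. length (P n) \<le> k} \<subseteq> {n. d \<one> (\<eta> n) \<le> k}" using P by fastforce
    qed (rule floyd_boundary_escapes[OF \<eta>])
  qed
  then obtain \<alpha> where \<alpha>: "\<And>k N. \<exists>n\<ge>N. k < length (P n) \<and> (\<forall>i\<le>k. P n ! i = \<alpha> i)"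
    by blast
  have ray: "geod_ray G S \<one> \<alpha>"
  proof (rule geod_ray_of_geodesic_walks[of P])
    show "cay_walk G S (P n) \<and> hd (P n) = \<one> \<and> length (P n) = Suc (d \<one> (last (P n)))" for n
      using P[of n] by simp
    show "\<exists>n. k < length (P n) \<and> (\<forall>i\<le>k. P n ! i = \<alpha> i)" for k
      using \<alpha>[of 0 k] by auto
  qed
  have "(\<lambda>k. \<rho> \<one> (\<alpha> k) (\<eta> k)) \<longlonglongrightarrow> 0"
  proof (rule LIMSEQ_I)
    fix e :: real assume e: "0 < e"
    then obtain N where N: "\<And>m n. m \<ge> N \<Longrightarrow> n \<ge> N \<Longrightarrow> \<rho> \<one> (\<eta> m) (\<eta> n) < e / 2"
      using c unfolding floyd_cauchy_def by (meson half_gt_zero)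
    obtain K where K: "lam ^ K < e / 2 * (1 - lam)"
      using real_arch_pow_inv[of "e / 2 * (1 - lam)" lam] e lam_less_1 by auto
    have "norm (\<rho> \<one> (\<alpha> k) (\<eta> k) - 0) < e" if k: "max N K \<le> k" for k
    proof -
      obtain n where n: "n \<ge> N" "k < length (P n)" "P n ! k = \<alpha> k"
        using \<alpha>[of N k] by blast
      have "\<rho> \<one> (\<alpha> k) (\<eta> n) \<le> lam ^ k / (1 - lam)"
        using floyd_dist_geodesic_walk_suffix[of "P n" k] P[of n] n by simp
      also have "\<dots> \<le> lam ^ K / (1 - lam)"
        using k lam_pos lam_less_1 by (intro divide_right_mono power_decreasing) auto
      also have "\<dots> < e / 2" using K lam_less_1 by (simp add: divide_less_eq)
      finally have "\<rho> \<one> (\<alpha> k) (\<eta> n) < e / 2" .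
      moreover have "\<rho> \<one> (\<eta> n) (\<eta> k) < e / 2" using N n(1) k by simp
      moreover have "\<rho> \<one> (\<alpha> k) (\<eta> k) \<le> \<rho> \<one> (\<alpha> k) (\<eta> n) + \<rho> \<one> (\<eta> n) (\<eta> k)"
        by (rule floyd_dist_triangle[OF geod_ray_carrier[OF ray] \<eta>_carrier \<eta>_carrier])
      moreover have "0 \<le> \<rho> \<one> (\<alpha> k) (\<eta> k)"
        by (rule floyd_dist_nonneg[OF geod_ray_carrier[OF ray] \<eta>_carrier])
      ultimately show ?thesis by simp
    qed
    then show "\<exists>N. \<forall>k\<ge>N. norm (\<rho> \<one> (\<alpha> k) (\<eta> k) - 0) < e" by blast
  qed
  then show ?thesis using ray unfolding geod_to_def by blast
qed

section \<open>Balls inside shadows\<close>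

lemma floyd_dist_far_geod_ray:
  assumes \<beta>: "geod_ray G S \<one> \<beta>" and v: "v \<in> carrier G" and far: "\<And>t. m \<le> d v (\<beta> t)"
  shows "\<rho> v \<one> (\<beta> n) \<le> sqrt lam ^ m * (2 / (sqrt lam * (1 - sqrt lam)))"
proof -
  define \<mu> where "\<mu> = sqrt lam"
  have \<mu>: "0 < \<mu>" "\<mu> < 1" "\<mu> ^ 2 = lam" unfolding \<mu>_def using lam_pos lam_less_1 by auto
  define D where "D = d \<one> v"
  have offset: "\<bar>int t - int D\<bar> \<le> int (d v (\<beta> t))" for t
    using word_dist_triangle[OF one_closed v geod_ray_carrier[OF \<beta>], of t]
      word_dist_triangle[OF one_closed geod_ray_carrier[OF \<beta>] v, of t]
      word_dist_sym[OF v geod_ray_carrier[OF \<beta>], of t] geod_ray_dist_start[OF \<beta>, of t]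
    unfolding D_def by linarith
  (* The exponent e of the edge at position t is at least m and at least |t - D| - 1, so
     2 e + 1 >= m + |t - D|: the weight is bounded by a square root of lam ^ m times a geometric
     term centred at D. *)
  have edge: "lam ^ min (d v (\<beta> t)) (d v (\<beta> (Suc t))) \<le> \<mu> ^ m * \<mu> ^ nat \<bar>int t - int D\<bar> / \<mu>"
    for t
  proof -
    define e where "e = min (d v (\<beta> t)) (d v (\<beta> (Suc t)))"
    have "m + nat \<bar>int t - int D\<bar> \<le> 2 * e + 1"
      using offset[of t] offset[of "Suc t"] far[of t] far[of "Suc t"] unfolding e_def by linarith
    then have "\<mu> ^ (2 * e + 1) \<le> \<mu> ^ (m + nat \<bar>int t - int D\<bar>)"
      using \<mu> by (intro power_decreasing) auto
    moreover have "lam ^ e = \<mu> ^ (2 * e)" using \<mu>(3) by (simp add: power_mult)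
    ultimately have "lam ^ e * \<mu> \<le> \<mu> ^ m * \<mu> ^ nat \<bar>int t - int D\<bar>"
      by (simp add: power_add mult.commute)
    then show ?thesis unfolding e_def using \<mu> by (simp add: pos_le_divide_eq)
  qed
  let ?p = "map (\<lambda>k. \<beta> (0 + k)) [0..<Suc n]"
  have "\<rho> v \<one> (\<beta> n) \<le> flen v ?p"
    using floyd_dist_le_len[OF geod_ray_walk[OF \<beta>], of 0 n \<one> "\<beta> n" v] \<beta>
    unfolding geod_ray_def by (simp add: hd_map last_map del: upt_Suc)
  also have "\<dots> = (\<Sum>t<n. lam ^ min (d v (\<beta> t)) (d v (\<beta> (Suc t))))"
    unfolding floyd_len_def by (intro sum.cong) (auto simp del: upt_Suc)
  also have "\<dots> \<le> (\<Sum>t<n. \<mu> ^ m / \<mu> * \<mu> ^ nat \<bar>int t - int D\<bar>)"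
    using edge by (intro sum_mono) simp
  also have "\<dots> = \<mu> ^ m / \<mu> * (\<Sum>t<n. \<mu> ^ nat \<bar>int t - int D\<bar>)"
    by (simp add: sum_distrib_left)
  also have "\<dots> \<le> \<mu> ^ m / \<mu> * (2 / (1 - \<mu>))"
    using sum_power_abs_diff_le[OF \<mu>(1,2)] \<mu> by (intro mult_left_mono) auto
  finally show ?thesis unfolding \<mu>_def by simp
qed

lemma floyd_dist_ext_le_far_geod_to:
  assumes \<xi>: "floyd_cauchy G S lam \<xi>" and \<eta>: "floyd_cauchy G S lam \<eta>"
    and \<alpha>: "geod_to G S lam \<one> \<eta> \<alpha>" and v: "v \<in> carrier G" and far: "\<And>t. m \<le> d v (\<alpha> t)"
  shows "floyd_dist_ext G S lam v (\<lambda>_. \<one>) \<xi>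
    \<le> sqrt lam ^ m * (2 / (sqrt lam * (1 - sqrt lam))) + floyd_dist_ext G S lam \<one> \<xi> \<eta> / lam ^ d \<one> v"
proof -
  define W where "W = sqrt lam ^ m * (2 / (sqrt lam * (1 - sqrt lam)))"
  define K where "K = lam ^ d \<one> v"
  have "0 < K" unfolding K_def using lam_pos by simp
  have \<alpha>_ray: "geod_ray G S \<one> \<alpha>" and \<alpha>_lim: "(\<lambda>n. \<rho> \<one> (\<alpha> n) (\<eta> n)) \<longlonglongrightarrow> 0"
    using \<alpha> unfolding geod_to_def by auto
  have c: "\<alpha> n \<in> carrier G" "\<xi> n \<in> carrier G" "\<eta> n \<in> carrier G" for n
    using geod_ray_carrier[OF \<alpha>_ray] floyd_cauchy_carrier \<xi> \<eta> by blast+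
  have base: "\<rho> v x y \<le> \<rho> \<one> x y / K" if "x \<in> carrier G" "y \<in> carrier G" for x y
    using floyd_dist_change_base[OF one_closed v that] unfolding K_def .
  let ?c = "\<lambda>n. W + \<rho> \<one> (\<alpha> n) (\<eta> n) / K + \<rho> \<one> (\<xi> n) (\<eta> n) / K"
  have "?c \<longlonglongrightarrow> W + 0 / K + floyd_dist_ext G S lam \<one> \<xi> \<eta> / K"
    by (intro tendsto_intros \<alpha>_lim floyd_dist_ext_tendsto[OF \<xi> \<eta> one_closed]) (use \<open>0 < K\<close> in auto)
  moreover have "\<rho> v \<one> (\<xi> n) \<le> ?c n" for n
  proof -
    have "\<rho> v \<one> (\<xi> n) \<le> \<rho> v \<one> (\<alpha> n) + \<rho> v (\<alpha> n) (\<eta> n) + \<rho> v (\<eta> n) (\<xi> n)"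
      using floyd_dist_triangle[OF one_closed c(1)[of n] c(2)[of n], of v]
        floyd_dist_triangle[OF c(1)[of n] c(3)[of n] c(2)[of n], of v]
      by simp
    moreover have "\<rho> v \<one> (\<alpha> n) \<le> W"
      unfolding W_def by (rule floyd_dist_far_geod_ray[OF \<alpha>_ray v far])
    moreover have "\<rho> v (\<alpha> n) (\<eta> n) \<le> \<rho> \<one> (\<alpha> n) (\<eta> n) / K" by (rule base[OF c(1,3)])
    moreover have "\<rho> v (\<eta> n) (\<xi> n) \<le> \<rho> \<one> (\<xi> n) (\<eta> n) / K"
      using base[OF c(3,2)] floyd_dist_sym[OF c(2,3), of \<one>] by simp
    ultimately show ?thesis by linarith
  qed
  ultimately have "floyd_dist_ext G S lam v (\<lambda>_. \<one>) \<xi> \<le> W + 0 / K + floyd_dist_ext G S lam \<one> \<xi> \<eta> / K"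
    by (intro floyd_dist_ext_le[OF floyd_cauchy_const[OF one_closed] \<xi> v]) auto
  then show ?thesis unfolding W_def K_def by simp
qed

lemma floyd_ball_subset_shadow:
  assumes "0 < \<kappa>"
  shows "\<exists>R>0. \<exists>C2>0. \<forall>\<xi> \<gamma> v.
            \<xi> \<in> floyd_boundary G S lam \<and> geod_to G S lam \<one> \<xi> \<gamma> \<and> v \<in> range \<gamma> \<and>
            floyd_dist_ext G S lam v (\<lambda>_. \<one>) \<xi> \<ge> \<kappa> \<longrightarrow>
            floyd_ball G S lam \<xi> (C2 * lam ^ d \<one> v) \<subseteq> shadow G S lam \<one> v R"
proof -
  define W where "W = 2 / (sqrt lam * (1 - sqrt lam))"
  have "0 < W" "sqrt lam < 1" unfolding W_def using lam_pos lam_less_1 by auto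
  then obtain M where "sqrt lam ^ M < \<kappa> / 2 / W"
    using real_arch_pow_inv[of "\<kappa> / 2 / W" "sqrt lam"] assms by auto
  then have MW: "sqrt lam ^ M * W < \<kappa> / 2" using \<open>0 < W\<close> by (simp add: pos_less_divide_eq)
  have main: "\<eta> \<in> shadow G S lam \<one> v (real M + 1)"
    if \<xi>: "\<xi> \<in> floyd_boundary G S lam" and \<gamma>: "geod_to G S lam \<one> \<xi> \<gamma>" and "v \<in> range \<gamma>"
      and \<kappa>: "\<kappa> \<le> floyd_dist_ext G S lam v (\<lambda>_. \<one>) \<xi>"
      and \<eta>: "\<eta> \<in> floyd_ball G S lam \<xi> (\<kappa> / 2 * lam ^ d \<one> v)" for \<xi> \<gamma> v \<eta>
  proof -
    have \<eta>_bdry: "\<eta> \<in> floyd_boundary G S lam"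
      and \<eta>_close: "floyd_dist_ext G S lam \<one> \<xi> \<eta> < \<kappa> / 2 * lam ^ d \<one> v"
      using \<eta> unfolding floyd_ball_def by auto
    have v: "v \<in> carrier G"
      using \<open>v \<in> range \<gamma>\<close> \<gamma> geod_ray_carrier unfolding geod_to_def by blast
    obtain \<alpha> where \<alpha>: "geod_to G S lam \<one> \<eta> \<alpha>" using geod_to_exists[OF \<eta>_bdry] by blast
    have "\<exists>i. real (d (\<alpha> i) v) \<le> real M + 1"
    proof (rule ccontr)
      assume "\<not> ?thesis"
      then have "real M + 1 < real (d (\<alpha> t) v)" for t by (meson not_le)
      then have "M + 1 < d (\<alpha> t) v" for t by (metis of_nat_1 of_nat_add of_nat_less_iff)
      then have "M \<le> d v (\<alpha> t)" for t
        using word_dist_sym[OF v, of "\<alpha> t"] geod_ray_carrier[of \<one> \<alpha> t] \<alpha> unfolding geod_to_def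
        by (metis add_lessD1 less_imp_le)
      then have "floyd_dist_ext G S lam v (\<lambda>_. \<one>) \<xi>
          \<le> sqrt lam ^ M * W + floyd_dist_ext G S lam \<one> \<xi> \<eta> / lam ^ d \<one> v"
        unfolding W_def using floyd_dist_ext_le_far_geod_to[OF _ _ \<alpha> v] floyd_boundary_cauchy \<xi> \<eta>_bdry
        by blast
      moreover have "floyd_dist_ext G S lam \<one> \<xi> \<eta> / lam ^ d \<one> v < \<kappa> / 2"
        using \<eta>_close lam_pos by (simp add: divide_less_eq)
      ultimately show False using MW \<kappa> by linarith
    qed
    then show ?thesis unfolding shadow_def using \<eta>_bdry \<alpha> by blast
  qed
  show ?thesis
  proof (rule exI[of _ "real M + 1"], intro conjI exI[of _ "\<kappa> / 2"] allI impI subsetI)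
    show "0 < real M + 1" "0 < \<kappa> / 2" using assms by simp_all
    fix \<xi> \<gamma> v \<eta>
    assume "\<xi> \<in> floyd_boundary G S lam \<and> geod_to G S lam \<one> \<xi> \<gamma> \<and> v \<in> range \<gamma> \<and>
      \<kappa> \<le> floyd_dist_ext G S lam v (\<lambda>_. \<one>) \<xi>" "\<eta> \<in> floyd_ball G S lam \<xi> (\<kappa> / 2 * lam ^ d \<one> v)"
    then show "\<eta> \<in> shadow G S lam \<one> v (real M + 1)" using main by blast
  qed
qed

end

theorem lemma8p12:
  fixes G (structure) and S :: "'a set" and lam :: real
  assumes "group G" and "finite S" and "S \<subseteq> carrier G" and "generate G S = carrier G"
    and "0 < lam" and "lam < 1"
  shows "(\<forall>R>0. \<exists>C1>0. \<forall>\<xi> \<gamma> v.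
            \<xi> \<in> floyd_boundary G S lam \<and> geod_to G S lam \<one> \<xi> \<gamma> \<and> v \<in> range \<gamma> \<longrightarrow>
            shadow G S lam \<one> v R \<subseteq> floyd_ball G S lam \<xi> (C1 * lam ^ word_dist G S \<one> v))
       \<and> (\<forall>\<kappa>>0. \<exists>R>0. \<exists>C2>0. \<forall>\<xi> \<gamma> v.
            \<xi> \<in> floyd_boundary G S lam \<and> geod_to G S lam \<one> \<xi> \<gamma> \<and> v \<in> range \<gamma> \<and>
            floyd_dist_ext G S lam v (\<lambda>_. \<one>) \<xi> \<ge> \<kappa> \<longrightarrow>
            floyd_ball G S lam \<xi> (C2 * lam ^ word_dist G S \<one> v) \<subseteq> shadow G S lam \<one> v R)"
proof -
  interpret cayley_floyd G S lam
    using assms by (simp add: cayley_floyd_def cayley_floyd_axioms_def)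
  show ?thesis using shadow_subset_floyd_ball floyd_ball_subset_shadow by blast
qed

end
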